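(* Fix $b$ real unimodal polynomials $p_1,\dots,p_b$ preserving $[-1,1]$. For every $\beta\in(0,1)$ and $b\in\mathbb N$ there exist a Jordan domain $U_\beta\subset\mathbb C$ containing $I=[-1,1]$ and a constant $M_\beta>0$ such that for every map $g$ in the Epstein class $\hat{\mathcal E}_\beta$, the holomorphic extension of $g$ is well-defined on $U_\beta$ and satisfies $|g(z)|\le M_\beta$ for all $z\in U_\beta$.
   Context: A diffeomorphism $\phi:I\to I$ is in the Epstein class $\mathcal E_\beta$ ($\beta>0$) if $\phi^{-1}$ extends to a holomorphic univalent map from $\mathbb C\setminus((-\infty,-1-\beta]\cup[1+\beta,\infty))$ into $\mathbb C$. With the polynomials $P=\{p_1,\dots,p_b\}$ fixed, $\hat{\mathcal E}_\beta$ denotes the set of maps $f:I\to I$ of the form $f=\phi_j\circ p_j\circ\phi_{j-1}\circ p_{j-1}\circ\dots\circ\phi_1\circ p_1$ with $j\le b$ and each $\phi_i\in\mathcal E_\beta$. *)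

theory Defs
  imports "HOL-Complex_Analysis.Complex_Analysis" "HOL-Computational_Algebra.Polynomial"
begin

abbreviation I_int :: "real set" where "I_int \<equiv> {-1..1}"

definition diffeo_I :: "(real \<Rightarrow> real) \<Rightarrow> bool" where
  "diffeo_I \<phi> \<longleftrightarrow> bij_betw \<phi> I_int I_int \<and>
     (\<exists>\<phi>'. continuous_on I_int \<phi>' \<and>
        (\<forall>x\<in>I_int. (\<phi> has_real_derivative \<phi>' x) (at x within I_int) \<and> \<phi>' x \<noteq> 0))"

definition slit_plane :: "real \<Rightarrow> complex set" where
  "slit_plane \<beta> = UNIV - {z. Im z = 0 \<and> (Re z \<le> -1 - \<beta> \<or> Re z \<ge> 1 + \<beta>)}"

definition epstein :: "real \<Rightarrow> (real \<Rightarrow> real) \<Rightarrow> bool" where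
  "epstein \<beta> \<phi> \<longleftrightarrow> diffeo_I \<phi> \<and>
     (\<exists>H. H holomorphic_on slit_plane \<beta> \<and> inj_on H (slit_plane \<beta>) \<and>
        (\<forall>y\<in>I_int. H (complex_of_real y) = complex_of_real (inv_into I_int \<phi> y)))"

definition unimodal_poly_I :: "real poly \<Rightarrow> bool" where
  "unimodal_poly_I p \<longleftrightarrow> poly p ` I_int \<subseteq> I_int \<and>
     (\<exists>c\<in>{-1<..<1}.
        (strict_mono_on {-1..c} (poly p) \<and> strict_mono_on {c..1} (\<lambda>x. - poly p x)) \<or>
        (strict_mono_on {-1..c} (\<lambda>x. - poly p x) \<and> strict_mono_on {c..1} (poly p)))"

fun chain_map :: "(nat \<Rightarrow> real \<Rightarrow> real) \<Rightarrow> (nat \<Rightarrow> real poly) \<Rightarrow> nat \<Rightarrow> real \<Rightarrow> real" where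
  "chain_map \<phi> p 0 = id"
| "chain_map \<phi> p (Suc i) = \<phi> (Suc i) \<circ> poly (p (Suc i)) \<circ> chain_map \<phi> p i"

definition epstein_hat :: "real \<Rightarrow> nat \<Rightarrow> (nat \<Rightarrow> real poly) \<Rightarrow> (real \<Rightarrow> real) set" where
  "epstein_hat \<beta> b p = {g. \<exists>j \<phi>. j \<le> b \<and> (\<forall>i\<in>{1..j}. epstein \<beta> (\<phi> i)) \<and>
                              (\<forall>x\<in>I_int. g x = chain_map \<phi> p j x)}"

definition jordan_domain :: "complex set \<Rightarrow> bool" where
  "jordan_domain U \<longleftrightarrow> (\<exists>c. simple_path c \<and> pathfinish c = pathstart c \<and>
                              U = inside (path_image c))"

end

theory Submission
  imports Defs
begin

text \<open>
  An Epstein map \<phi> is the restriction to I of the inverse of a map H that is univalent on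
  the slit plane, hence on the disc of radius 1 + \<beta>; after multiplication by \<plusminus>1, H fixes
  \<plusminus>1 and preserves I. Such normalised maps omit the values \<plusminus>1 off \<plusminus>1, so by Montel's
  theorem in Picard's form they form a normal family, which by Hurwitz's theorem is closed
  under locally uniform limits. Compactness then gives one \<epsilon> > 0 such that every normalised
  H covers the \<epsilon>-neighbourhood of I by the image of the \<delta>-neighbourhood, so the inverse of
  H extends \<phi> holomorphically from the former into the latter, uniformly in \<phi>. Composing at
  most b such extensions with the polynomials, which are uniformly continuous near I, gives a
  neighbourhood of I on which every map of the class extends with values in the
  \<beta>-neighbourhood of I, hence of modulus at most 1 + \<beta>; any Jordan domain between I and that neighbourhood, e.g. an ellipse, does the job.
\<close>

lemma uniformly_bounded_across_point:
  assumes "open S" "a \<in> S"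
    and hol: "\<And>h. h \<in> X \<Longrightarrow> h holomorphic_on S"
    and bounded: "\<And>K. compact K \<Longrightarrow> K \<subseteq> S - {a} \<Longrightarrow> \<exists>B. \<forall>h\<in>X. \<forall>z\<in>K. cmod (h z) \<le> B"
    and "compact K" "K \<subseteq> S"
  shows "\<exists>B. \<forall>h\<in>X. \<forall>z\<in>K. cmod (h z) \<le> B"
proof -
  obtain r where "r > 0" and r: "cball a r \<subseteq> S"
    using assms(1,2) open_contains_cball by blast
  define K' where "K' = (K - ball a r) \<union> sphere a r"
  have "compact K'"
    unfolding K'_def using \<open>compact K\<close> by (intro compact_Un compact_diff) auto
  moreover have "K' \<subseteq> S - {a}"
    unfolding K'_def using \<open>K \<subseteq> S\<close> r \<open>r > 0\<close> by auto
  ultimately obtain B where B: "\<And>h z. h \<in> X \<Longrightarrow> z \<in> K' \<Longrightarrow> cmod (h z) \<le> B"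
    using bounded by meson
  have "cmod (h z) \<le> B" if "h \<in> X" "z \<in> K" for h z
  proof (cases "z \<in> ball a r")
    case True
    have "h holomorphic_on cball a r"
      using hol[OF \<open>h \<in> X\<close>] r by (rule holomorphic_on_subset)
    show ?thesis
    proof (rule maximum_modulus_frontier[where S="cball a r" and f=h])
      show "h holomorphic_on interior (cball a r)"
        using \<open>h holomorphic_on cball a r\<close> by (rule holomorphic_on_subset) auto
      show "continuous_on (closure (cball a r)) h"
        using \<open>h holomorphic_on cball a r\<close> by (simp add: holomorphic_on_imp_continuous_on)
      show "cmod (h w) \<le> B" if "w \<in> frontier (cball a r)" for w
        using that B[OF \<open>h \<in> X\<close>] \<open>r > 0\<close> by (simp add: K'_def frontier_cball)
    qed (use True in auto)
  next
    case False
    then show ?thesis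
      using B[OF \<open>h \<in> X\<close>] \<open>z \<in> K\<close> by (auto simp: K'_def)
  qed
  then show ?thesis
    by blast
qed

lemma Hurwitz_omitted_limit_value:
  assumes "open S" "connected S"
    and "\<And>n. F n holomorphic_on S" "g holomorphic_on S"
    and ul: "\<And>K. compact K \<Longrightarrow> K \<subseteq> S \<Longrightarrow> uniform_limit K F g sequentially"
    and nonconst: "\<not> g constant_on S"
    and w: "w \<longlonglongrightarrow> c" and omits: "\<And>n z. z \<in> S \<Longrightarrow> F n z \<noteq> w n"
    and "z \<in> S"
  shows "g z \<noteq> c"
proof -
  have "(\<lambda>z. g z - c) z \<noteq> 0"
  proof (rule Hurwitz_no_zeros[where \<F>="\<lambda>n z. F n z - w n" and g="\<lambda>z. g z - c"])
    show "uniform_limit K (\<lambda>n z. F n z - w n) (\<lambda>z. g z - c) sequentially"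
      if "compact K" "K \<subseteq> S" for K
      using ul[OF that] w by (intro uniform_limit_minus) (auto simp: uniform_limit_iff tendsto_iff)
    show "\<not> (\<lambda>z. g z - c) constant_on S"
      using nonconst constant_on_compose[of "\<lambda>z. g z - c" S "\<lambda>u. u + c"] by (auto simp: o_def)
  qed (use assms in \<open>auto intro!: holomorphic_intros\<close>)
  then show ?thesis
    by simp
qed

lemma continuous_bij_endpoints:
  fixes f :: "real \<Rightarrow> real"
  assumes "a \<le> b" "continuous_on {a..b} f" "bij_betw f {a..b} {a..b}"
  shows "f a = a \<and> f b = b \<or> f a = b \<and> f b = a"
proof -
  have inj: "inj_on f {a..b}" and onto: "f ` {a..b} = {a..b}"
    using assms(3) by (auto simp: bij_betw_def)
  have "a \<le> f a" "f a \<le> b" "a \<le> f b" "f b \<le> b"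
    using onto assms(1) by auto
  then have interior: "f t \<noteq> a \<and> f t \<noteq> b" if "a < t" "t < b" for t
    using continuous_inj_imp_mono[OF that assms(2) inj] by auto
  obtain s t where "s \<in> {a..b}" "f s = a" "t \<in> {a..b}" "f t = b"
    using onto assms(1) by (metis atLeastAtMost_iff imageE order_refl)
  moreover from this have "s = a \<or> s = b" "t = a \<or> t = b"
    using interior[of s] interior[of t] by force+
  ultimately show ?thesis
    by auto
qed

lemma continuous_on_of_real_restriction:
  assumes "continuous_on S H" "complex_of_real ` A \<subseteq> S"
    and "\<And>y. y \<in> A \<Longrightarrow> H (complex_of_real y) = complex_of_real (f y)"
  shows "continuous_on A f"
proof -
  have "continuous_on A (\<lambda>y. Re (H (complex_of_real y)))"
    by (intro continuous_on_Re continuous_on_compose2[OF assms(1)] continuous_intros assms(2))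
  then show ?thesis
    using assms(3) by (auto elim!: continuous_on_eq)
qed

lemma jordan_domain_linear_image_ball:
  fixes L :: "complex \<Rightarrow> complex"
  assumes lin: "linear L" and inj: "inj L"
  shows "jordan_domain (L ` ball 0 1)"
proof -
  define E where "E = L ` cball 0 1"
  have "convex E" "bounded E"
    unfolding E_def using lin
    by (auto intro: convex_linear_image bounded_linear_image linear_conv_bounded_linear[THEN iffD1])
  have "closure E = L ` cball 0 1" "interior E = L ` ball 0 1"
    unfolding E_def using closure_injective_linear_image[OF lin inj, of "cball 0 1"]
      interior_injective_linear_image[OF lin inj, of "cball 0 1"] by simp_all
  then have "frontier E = L ` sphere 0 1"
    unfolding frontier_def using inj
    by (simp add: image_set_diff[symmetric] cball_diff_eq_sphere[symmetric])
  define \<gamma> where "\<gamma> = L \<circ> circlepath 0 1"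
  have "simple_path \<gamma>" "pathfinish \<gamma> = pathstart \<gamma>"
    unfolding \<gamma>_def using simple_path_linear_image_eq[OF lin inj] simple_path_circlepath
    by (auto simp: pathfinish_compose pathstart_compose)
  moreover have "path_image \<gamma> = frontier E"
    unfolding \<gamma>_def \<open>frontier E = L ` sphere 0 1\<close> by (simp add: path_image_compose)
  then have "inside (path_image \<gamma>) = L ` ball 0 1"
    using inside_frontier_eq_interior[OF \<open>bounded E\<close> \<open>convex E\<close>] \<open>interior E = L ` ball 0 1\<close>
    by simp
  ultimately show ?thesis
    unfolding jordan_domain_def by metis
qed

lemma poly_map_poly_of_real:
  "poly (map_poly of_real q) (of_real x) = (of_real (poly q x) :: 'a :: {comm_ring_1, real_algebra_1})"
  by (induction q) (auto simp: map_poly_pCons)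

definition I_nbhd :: "real \<Rightarrow> complex set" where
  "I_nbhd d = (\<Union>x\<in>I_int. ball (complex_of_real x) d)"

lemma mem_I_nbhd_iff: "w \<in> I_nbhd d \<longleftrightarrow> (\<exists>x\<in>I_int. cmod (w - complex_of_real x) < d)"
  unfolding I_nbhd_def by (auto simp: dist_norm norm_minus_commute)

lemma I_nbhd_mono: "d \<le> e \<Longrightarrow> I_nbhd d \<subseteq> I_nbhd e"
  unfolding I_nbhd_def by auto

lemma ball_subset_I_nbhd: "x \<in> I_int \<Longrightarrow> ball (complex_of_real x) d \<subseteq> I_nbhd d"
  unfolding I_nbhd_def by auto

lemma I_nbhd_subset_ball: "1 + d \<le> R \<Longrightarrow> I_nbhd d \<subseteq> ball 0 R"
proof
  fix z assume "1 + d \<le> R" "z \<in> I_nbhd d"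
  then obtain x where "x \<in> I_int" "cmod (z - complex_of_real x) < d"
    by (auto simp: mem_I_nbhd_iff)
  moreover have "cmod z \<le> cmod (complex_of_real x) + cmod (z - complex_of_real x)"
    by (rule norm_triangle_sub)
  ultimately show "z \<in> ball 0 R"
    using \<open>1 + d \<le> R\<close> by auto
qed

lemma uminus_mem_I_nbhd: "w \<in> I_nbhd d \<Longrightarrow> - w \<in> I_nbhd d"
proof -
  assume "w \<in> I_nbhd d"
  then obtain x where "x \<in> I_int" "cmod (w - complex_of_real x) < d"
    by (auto simp: mem_I_nbhd_iff)
  moreover have "- w - complex_of_real (- x) = - (w - complex_of_real x)"
    by simp
  ultimately show "- w \<in> I_nbhd d"
    unfolding mem_I_nbhd_iff by (metis atLeastAtMost_iff minus_minus neg_le_iff_le norm_minus_cancel)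
qed

lemma of_real_I_subset_ball: "1 < R \<Longrightarrow> complex_of_real ` I_int \<subseteq> ball 0 R"
  by auto

lemma jordan_domain_between_I_and_I_nbhd:
  assumes "0 < \<eta>"
  obtains U where "jordan_domain U" "complex_of_real ` I_int \<subseteq> U" "U \<subseteq> I_nbhd \<eta>"
proof -
  define a where "a = 1 + \<eta> / 3"
  define c where "c = \<eta> / 3"
  define L where "L z = Complex (a * Re z) (c * Im z)" for z
  have "a > 1" "c > 0"
    using assms by (auto simp: a_def c_def)
  have lin: "linear L"
    by (rule linearI) (auto simp: L_def complex_eq_iff algebra_simps)
  have inj: "inj L"
    using \<open>a > 1\<close> \<open>c > 0\<close> by (auto simp: inj_on_def L_def complex_eq_iff)
  have "jordan_domain (L ` ball 0 1)"
    using lin inj by (rule jordan_domain_linear_image_ball)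
  moreover have "complex_of_real x \<in> L ` ball 0 1" if "x \<in> I_int" for x
  proof
    show "complex_of_real x = L (complex_of_real (x / a))"
      using \<open>a > 1\<close> by (simp add: L_def complex_eq_iff)
    have "\<bar>x / a\<bar> < 1"
      using that \<open>a > 1\<close> by (auto simp: abs_less_iff field_simps)
    then show "complex_of_real (x / a) \<in> ball 0 1"
      by (metis mem_ball_0 norm_of_real)
  qed
  moreover have "z \<in> I_nbhd \<eta>" if "z \<in> L ` ball 0 1" for z
  proof -
    obtain v where v: "cmod v < 1" "z = L v"
      using \<open>z \<in> L ` ball 0 1\<close> by auto
    have "\<bar>Re v\<bar> < 1" "\<bar>Im v\<bar> < 1"
      using v(1) abs_Re_le_cmod abs_Im_le_cmod by (metis le_less_trans)+
    then have "\<bar>Re z\<bar> < a" "\<bar>Im z\<bar> < c"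
      using \<open>a > 1\<close> \<open>c > 0\<close> v(2) by (auto simp: L_def abs_mult)
    define x where "x = max (-1) (min 1 (Re z))"
    have "\<bar>Re (z - complex_of_real x)\<bar> + \<bar>Im (z - complex_of_real x)\<bar> < \<eta>"
      using \<open>\<bar>Re z\<bar> < a\<close> \<open>\<bar>Im z\<bar> < c\<close> by (auto simp: x_def a_def c_def)
    then have "cmod (z - complex_of_real x) < \<eta>"
      using cmod_le le_less_trans by blast
    moreover have "x \<in> I_int"
      by (auto simp: x_def)
    ultimately show ?thesis
      by (auto simp: mem_I_nbhd_iff)
  qed
  ultimately show ?thesis
    using that by blast
qed

definition I_nbhd_extension ::
    "(real \<Rightarrow> real) \<Rightarrow> real \<Rightarrow> real \<Rightarrow> (complex \<Rightarrow> complex) \<Rightarrow> bool" where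
  "I_nbhd_extension f \<eta> \<delta> G \<longleftrightarrow> G holomorphic_on I_nbhd \<eta> \<and> G ` I_nbhd \<eta> \<subseteq> I_nbhd \<delta> \<and>
     (\<forall>x\<in>I_int. G (complex_of_real x) = complex_of_real (f x))"

lemma I_nbhd_extension_id: "\<eta> \<le> \<delta> \<Longrightarrow> I_nbhd_extension id \<eta> \<delta> id"
  unfolding I_nbhd_extension_def using I_nbhd_mono by auto

lemma I_nbhd_extension_mono:
  "I_nbhd_extension f \<eta> \<delta> G \<Longrightarrow> \<eta>' \<le> \<eta> \<Longrightarrow> \<delta> \<le> \<delta>' \<Longrightarrow> I_nbhd_extension f \<eta>' \<delta>' G"
  unfolding I_nbhd_extension_def
  by (meson I_nbhd_mono holomorphic_on_subset image_mono subset_trans)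

lemma I_nbhd_extension_comp:
  assumes "I_nbhd_extension f \<eta> \<delta> G" "I_nbhd_extension g \<delta> \<epsilon> G'" "f ` I_int \<subseteq> I_int"
  shows "I_nbhd_extension (g \<circ> f) \<eta> \<epsilon> (G' \<circ> G)"
  using assms unfolding I_nbhd_extension_def
  by (auto simp: image_subset_iff intro: holomorphic_on_compose_gen)

lemma I_nbhd_extension_norm_le:
  assumes "I_nbhd_extension f \<eta> \<delta> G" "z \<in> I_nbhd \<eta>"
  shows "cmod (G z) \<le> 1 + \<delta>"
proof -
  have "G z \<in> ball 0 (1 + \<delta>)"
    using assms I_nbhd_subset_ball[of \<delta> "1 + \<delta>"] unfolding I_nbhd_extension_def by blast
  then show ?thesis
    by simp
qed

lemma poly_I_nbhd_extension:
  fixes q :: "real poly"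
  assumes "poly q ` I_int \<subseteq> I_int" "0 < \<epsilon>"
  obtains \<eta> where "\<eta> > 0" "I_nbhd_extension (poly q) \<eta> \<epsilon> (poly (map_poly of_real q))"
proof -
  define Q where "Q = poly (map_poly complex_of_real q)"
  have "uniformly_continuous_on (cball 0 2) Q"
    unfolding Q_def by (intro compact_uniformly_continuous) (auto intro!: continuous_intros)
  then obtain d where "d > 0"
    and d: "\<And>z w. z \<in> cball 0 2 \<Longrightarrow> w \<in> cball 0 2 \<Longrightarrow> dist w z < d \<Longrightarrow> dist (Q w) (Q z) < \<epsilon>"
    unfolding uniformly_continuous_on_def using \<open>0 < \<epsilon>\<close> by metis
  have "Q z \<in> I_nbhd \<epsilon>" if z: "z \<in> I_nbhd (min d 1)" for z
  proof -
    obtain x where x: "x \<in> I_int" "cmod (z - complex_of_real x) < min d 1"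
      using z unfolding mem_I_nbhd_iff by blast
    have "z \<in> cball 0 2"
      using I_nbhd_subset_ball[of "min d 1" 2] z by auto
    then have "dist (Q z) (Q (complex_of_real x)) < \<epsilon>"
      using d[of "complex_of_real x" z] x by (auto simp: dist_norm)
    moreover have "poly q x \<in> I_int"
      using x(1) assms(1) by blast
    ultimately show ?thesis
      unfolding mem_I_nbhd_iff Q_def by (auto simp: poly_map_poly_of_real dist_norm)
  qed
  moreover have "Q holomorphic_on I_nbhd (min d 1)"
    unfolding Q_def by (intro holomorphic_intros)
  ultimately show ?thesis
    using that[of "min d 1"] \<open>d > 0\<close>
    by (auto simp: I_nbhd_extension_def Q_def poly_map_poly_of_real)
qed

definition normalized_univalent :: "real \<Rightarrow> (complex \<Rightarrow> complex) set" where
  "normalized_univalent R = {H. H holomorphic_on ball 0 R \<and> inj_on H (ball 0 R) \<and>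
     H (-1) = -1 \<and> H 1 = 1 \<and> (\<forall>x\<in>I_int. H (complex_of_real x) \<in> complex_of_real ` I_int)}"

lemma normalized_univalent_omits_endpoints:
  assumes "1 < R" "H \<in> normalized_univalent R" "z \<in> ball 0 R" "z \<noteq> -1" "z \<noteq> 1"
  shows "H z \<noteq> -1" "H z \<noteq> 1"
proof -
  have "-1 \<in> ball (0::complex) R" "1 \<in> ball (0::complex) R"
    using assms(1) by auto
  then show "H z \<noteq> -1" "H z \<noteq> 1"
    using assms(2-5) inj_onD[of H "ball 0 R" z] by (auto simp: normalized_univalent_def)
qed

lemma normalized_univalent_norm_at_0: "H \<in> normalized_univalent R \<Longrightarrow> cmod (H 0) \<le> 1"
proof -
  assume "H \<in> normalized_univalent R"
  moreover have "(0::real) \<in> I_int"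
    by simp
  ultimately have "H (complex_of_real 0) \<in> complex_of_real ` I_int"
    unfolding normalized_univalent_def by blast
  then show ?thesis
    by auto
qed

text \<open>Montel's theorem in Picard's form applies to \<open>(H + 1) / 2\<close>, which omits 0 and 1.\<close>

lemma normalized_univalent_bounded_off_endpoints:
  assumes "1 < R" "compact K" "K \<subseteq> ball 0 R - {-1, 1}"
  shows "\<exists>B. \<forall>H\<in>normalized_univalent R. \<forall>z\<in>K. cmod (H z) \<le> B"
proof -
  define S where "S = ball (0::complex) R - {-1, 1}"
  define X where "X = (\<lambda>H z. (H z + 1) / 2) ` normalized_univalent R"
  have S: "open S" "connected S" "0 \<in> S"
    unfolding S_def using assms(1) by (auto intro: connected_open_delete_finite)
  have hol: "h holomorphic_on S" if "h \<in> X" for h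
    using that unfolding X_def S_def normalized_univalent_def
    by (auto intro!: holomorphic_intros elim: holomorphic_on_subset)
  have omits_0_1: "h z \<noteq> 0 \<and> h z \<noteq> 1" if "h \<in> X" "z \<in> S" for h z
    using that normalized_univalent_omits_endpoints[OF assms(1)]
    by (auto simp: X_def S_def add_eq_0_iff) (metis minus_minus)
  have at_0: "cmod (h 0) \<le> 1" if h: "h \<in> X" for h
  proof -
    obtain H where "H \<in> normalized_univalent R" "h = (\<lambda>z. (H z + 1) / 2)"
      using h X_def by auto
    moreover from this have "cmod (H 0 + 1) \<le> 2"
      using normalized_univalent_norm_at_0 norm_triangle_ineq[of "H 0" 1] by fastforce
    ultimately show ?thesis
      by (simp add: norm_divide)
  qed
  obtain B where B: "\<And>h z. h \<in> X \<Longrightarrow> z \<in> K \<Longrightarrow> cmod (h z) \<le> B"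
    by (rule GPicard3[of S 0 X X K]) (use S hol omits_0_1 at_0 assms(2,3) in \<open>auto simp: S_def\<close>)
  have "cmod (H z) \<le> 2 * B + 1" if "H \<in> normalized_univalent R" "z \<in> K" for H z
  proof -
    have "cmod ((H z + 1) / 2) \<le> B"
      using B[of "\<lambda>z. (H z + 1) / 2" z] that X_def by auto
    then show ?thesis
      using norm_triangle_ineq4[of "H z + 1" 1] by (simp add: norm_divide)
  qed
  then show ?thesis
    by blast
qed

lemma normalized_univalent_locally_bounded:
  assumes "1 < R" "compact K" "K \<subseteq> ball 0 R"
  shows "\<exists>B. \<forall>H\<in>normalized_univalent R. \<forall>z\<in>K. cmod (H z) \<le> B"
proof -
  have hol: "H holomorphic_on S" if "H \<in> normalized_univalent R" "S \<subseteq> ball 0 R" for H S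
    using that unfolding normalized_univalent_def by (auto elim: holomorphic_on_subset)
  have off_1: "\<exists>B. \<forall>H\<in>normalized_univalent R. \<forall>z\<in>L. cmod (H z) \<le> B"
    if "compact L" "L \<subseteq> ball 0 R - {1}" for L
  proof (rule uniformly_bounded_across_point[of "ball 0 R - {1}" "-1"])
    show "\<exists>B. \<forall>H\<in>normalized_univalent R. \<forall>z\<in>L'. cmod (H z) \<le> B"
      if "compact L'" "L' \<subseteq> ball 0 R - {1} - {-1}" for L'
      using that by (intro normalized_univalent_bounded_off_endpoints[OF assms(1)]) auto
  qed (use that assms(1) hol in auto)
  show ?thesis
    by (rule uniformly_bounded_across_point[of "ball 0 R" 1]) (use assms hol off_1 in auto)
qed

lemma normalized_univalent_closed:
  assumes "1 < R" and F: "\<And>n. F n \<in> normalized_univalent R"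
    and g: "g holomorphic_on ball 0 R"
    and ul: "\<And>K. compact K \<Longrightarrow> K \<subseteq> ball 0 R \<Longrightarrow> uniform_limit K F g sequentially"
  shows "g \<in> normalized_univalent R"
proof -
  have lim: "(\<lambda>n. F n z) \<longlonglongrightarrow> g z" if "z \<in> ball 0 R" for z
    using ul[of "{z}"] that by (auto intro: tendsto_uniform_limitI)
  have pm1: "-1 \<in> ball (0::complex) R" "1 \<in> ball (0::complex) R"
    using assms(1) by auto
  have "(\<lambda>n. F n (-1)) \<longlonglongrightarrow> -1" "(\<lambda>n. F n 1) \<longlonglongrightarrow> 1"
    using F by (simp_all add: normalized_univalent_def)
  then have g1: "g (-1) = -1" "g 1 = 1"
    using lim pm1 LIMSEQ_unique by blast+
  have "inj_on g (ball 0 R)"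
  proof (rule Hurwitz_injective[OF _ _ _ g ul])
    show "\<not> g constant_on ball 0 R"
      using g1 pm1 by (intro not_constant_onI[of g "-1" 1]) auto
  qed (use F in \<open>auto simp: normalized_univalent_def\<close>)
  moreover have "g (complex_of_real x) \<in> complex_of_real ` I_int" if "x \<in> I_int" for x
  proof (rule Lim_in_closed_set[OF _ _ _ lim])
    show "closed (complex_of_real ` I_int)"
      by (intro compact_imp_closed compact_continuous_image continuous_intros) auto
  qed (use F that assms(1) in \<open>auto simp: normalized_univalent_def\<close>)
  ultimately show ?thesis
    using g g1 by (simp add: normalized_univalent_def)
qed

lemma normalized_univalent_subseq_limit:
  fixes F :: "nat \<Rightarrow> complex \<Rightarrow> complex"
  assumes "1 < R" and F: "\<And>n. F n \<in> normalized_univalent R"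
  obtains g s where "g \<in> normalized_univalent R" "strict_mono s"
    "\<And>K. compact K \<Longrightarrow> K \<subseteq> ball 0 R \<Longrightarrow> uniform_limit K (F \<circ> s) g sequentially"
proof -
  obtain g s where g: "g holomorphic_on ball 0 R" "strict_mono s"
    and ul: "\<And>K. compact K \<Longrightarrow> K \<subseteq> ball 0 R \<Longrightarrow> uniform_limit K (F \<circ> s) g sequentially"
    by (rule Montel[of "ball 0 R" "normalized_univalent R" F])
       (use F normalized_univalent_locally_bounded[OF assms(1)] in
        \<open>auto simp: normalized_univalent_def\<close>)
  moreover have "g \<in> normalized_univalent R"
    using F by (intro normalized_univalent_closed[OF assms(1) _ g(1) ul]) auto
  ultimately show ?thesis
    using that by blast
qed

lemma normalized_univalent_onto_I:
  assumes "1 < R" "H \<in> normalized_univalent R" "y \<in> I_int"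
  obtains x where "x \<in> I_int" "H (complex_of_real x) = complex_of_real y"
proof -
  define h where "h x = Re (H (complex_of_real x))" for x
  have real: "H (complex_of_real x) = complex_of_real (h x)" if "x \<in> I_int" for x
    using assms(2) that by (force simp: normalized_univalent_def h_def)
  have "continuous_on (ball 0 R) H"
    using assms(2) by (simp add: normalized_univalent_def holomorphic_on_imp_continuous_on)
  then have "continuous_on I_int h"
    using of_real_I_subset_ball[OF assms(1)] real by (rule continuous_on_of_real_restriction)
  moreover have "h (-1) = -1" "h 1 = 1"
    using assms(2) by (auto simp: h_def normalized_univalent_def)
  ultimately obtain x where "x \<in> I_int" "h x = y"
    using IVT'[of h "-1" y 1] assms(3) by auto
  then show ?thesis
    using that real by auto
qed

lemma normalized_univalent_hits_convergent_seq:
  assumes "0 < \<delta>" "1 + \<delta> \<le> R" and F: "\<And>n. F n \<in> normalized_univalent R"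
    and w: "w \<longlonglongrightarrow> complex_of_real y" and "y \<in> I_int"
  shows "\<exists>n. w n \<in> F n ` I_nbhd \<delta>"
proof (rule ccontr)
  assume "\<nexists>n. w n \<in> F n ` I_nbhd \<delta>"
  then have omits: "\<And>n z. z \<in> I_nbhd \<delta> \<Longrightarrow> F n z \<noteq> w n"
    by (metis image_eqI)
  have "1 < R"
    using assms(1,2) by linarith
  obtain g s where g: "g \<in> normalized_univalent R" "strict_mono s"
    and ul: "\<And>K. compact K \<Longrightarrow> K \<subseteq> ball 0 R \<Longrightarrow> uniform_limit K (F \<circ> s) g sequentially"
    by (rule normalized_univalent_subseq_limit[of R F, OF \<open>1 < R\<close> F]) auto
  obtain x where x: "x \<in> I_int" "g (complex_of_real x) = complex_of_real y"
    by (rule normalized_univalent_onto_I[OF \<open>1 < R\<close> g(1) \<open>y \<in> I_int\<close>])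
  define D where "D = ball (complex_of_real x) \<delta>"
  have "D \<subseteq> I_nbhd \<delta>"
    unfolding D_def using ball_subset_I_nbhd[OF x(1)] .
  then have DR: "D \<subseteq> ball 0 R"
    using I_nbhd_subset_ball[OF assms(2)] by blast
  have "g holomorphic_on ball 0 R" "inj_on g (ball 0 R)"
    using g(1) by (auto simp: normalized_univalent_def)
  have "\<not> g constant_on D"
  proof (rule not_constant_onI)
    show "complex_of_real x \<in> D" "complex_of_real x + complex_of_real (\<delta> / 2) \<in> D"
      using assms(1) by (auto simp: D_def dist_norm)
    with DR show "g (complex_of_real x) \<noteq> g (complex_of_real x + complex_of_real (\<delta> / 2))"
      using inj_onD[OF \<open>inj_on g (ball 0 R)\<close>] assms(1) by fastforce
  qed
  moreover have "(F \<circ> s) n holomorphic_on D" for n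
    using F[of "s n"] DR unfolding normalized_univalent_def comp_apply
    by (blast intro: holomorphic_on_subset)
  moreover have "g holomorphic_on D"
    using \<open>g holomorphic_on ball 0 R\<close> DR by (rule holomorphic_on_subset)
  moreover have "(w \<circ> s) \<longlonglongrightarrow> complex_of_real y"
    using w g(2) by (rule LIMSEQ_subseq_LIMSEQ)
  moreover have "(F \<circ> s) n z \<noteq> (w \<circ> s) n" if "z \<in> D" for n z
    using omits \<open>D \<subseteq> I_nbhd \<delta>\<close> that by auto
  moreover have "uniform_limit K (F \<circ> s) g sequentially" if "compact K" "K \<subseteq> D" for K
    using ul DR that by blast
  ultimately have "g (complex_of_real x) \<noteq> complex_of_real y"
    by (intro Hurwitz_omitted_limit_value[of D "F \<circ> s" g "w \<circ> s"]) (use assms(1) in \<open>auto simp: D_def\<close>)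
  then show False
    using x(2) by blast
qed

lemma I_nbhd_shrinking_seq_subseq:
  assumes w: "\<And>n. w n \<in> I_nbhd (1 / Suc n)"
  obtains y r where "y \<in> I_int" "strict_mono r" "(w \<circ> r) \<longlonglongrightarrow> complex_of_real y"
proof -
  obtain x where x: "\<And>n. x n \<in> I_int" "\<And>n. cmod (w n - complex_of_real (x n)) < 1 / Suc n"
    using w unfolding mem_I_nbhd_iff by metis
  obtain y r where y: "y \<in> I_int" "strict_mono r" "(x \<circ> r) \<longlonglongrightarrow> y"
    using compact_imp_seq_compact[OF compact_Icc[of "-1::real" 1], unfolded seq_compact_def] x(1)
    by metis
  have "(\<lambda>n. w n - complex_of_real (x n)) \<longlonglongrightarrow> 0"
  proof (rule Lim_null_comparison)
    show "\<forall>\<^sub>F n in sequentially. cmod (w n - complex_of_real (x n)) \<le> 1 / Suc n"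
      using x(2) less_imp_le by (auto intro: always_eventually)
    show "(\<lambda>n. 1 / real (Suc n)) \<longlonglongrightarrow> 0"
      using LIMSEQ_Suc[OF lim_const_over_n] .
  qed
  then have "((\<lambda>n. w n - complex_of_real (x n)) \<circ> r) \<longlonglongrightarrow> 0"
    using y(2) by (rule LIMSEQ_subseq_LIMSEQ)
  moreover have "(\<lambda>n. complex_of_real ((x \<circ> r) n)) \<longlonglongrightarrow> complex_of_real y"
    using y(3) by (rule tendsto_of_real)
  ultimately have "(\<lambda>n. ((\<lambda>n. w n - complex_of_real (x n)) \<circ> r) n + complex_of_real ((x \<circ> r) n))
      \<longlonglongrightarrow> 0 + complex_of_real y"
    by (rule tendsto_add)
  then have "(w \<circ> r) \<longlonglongrightarrow> complex_of_real y"
    by (simp add: o_def)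
  then show ?thesis
    using that y(1,2) by blast
qed

lemma normalized_univalent_covers_I_nbhd:
  assumes "0 < \<delta>" "1 + \<delta> \<le> R"
  obtains \<epsilon> where "\<epsilon> > 0" "\<And>H. H \<in> normalized_univalent R \<Longrightarrow> I_nbhd \<epsilon> \<subseteq> H ` I_nbhd \<delta>"
proof -
  have "\<exists>\<epsilon>>0. \<forall>H\<in>normalized_univalent R. I_nbhd \<epsilon> \<subseteq> H ` I_nbhd \<delta>"
  proof (rule ccontr)
    assume "\<not> ?thesis"
    then have "\<exists>H w. H \<in> normalized_univalent R \<and> w \<in> I_nbhd (1 / Suc n) \<and> w \<notin> H ` I_nbhd \<delta>"
      for n :: nat
      by (metis subsetI divide_pos_pos of_nat_0_less_iff zero_less_Suc zero_less_one)
    then obtain F w where F: "\<And>n. F n \<in> normalized_univalent R"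
      and w: "\<And>n. w n \<in> I_nbhd (1 / Suc n)" and omits: "\<And>n. w n \<notin> F n ` I_nbhd \<delta>"
      by metis
    obtain y r where "y \<in> I_int" "strict_mono r" "(w \<circ> r) \<longlonglongrightarrow> complex_of_real y"
      using w by (rule I_nbhd_shrinking_seq_subseq)
    then have "\<exists>n. (w \<circ> r) n \<in> (F \<circ> r) n ` I_nbhd \<delta>"
      using F by (intro normalized_univalent_hits_convergent_seq[OF assms]) (auto simp: o_def)
    then show False
      using omits by auto
  qed
  then show ?thesis
    using that by blast
qed

lemma epstein_maps_I: "epstein \<beta> \<phi> \<Longrightarrow> \<phi> ` I_int \<subseteq> I_int"
  by (auto simp: epstein_def diffeo_I_def bij_betw_def)

lemma ball_subset_slit_plane: "ball 0 (1 + \<beta>) \<subseteq> slit_plane \<beta>"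
proof
  fix z :: complex
  assume "z \<in> ball 0 (1 + \<beta>)"
  then have "\<bar>Re z\<bar> < 1 + \<beta>"
    using abs_Re_le_cmod[of z] by simp
  then show "z \<in> slit_plane \<beta>"
    by (auto simp: slit_plane_def)
qed

lemma univalent_extension_normalized:
  assumes "1 < R" "H holomorphic_on ball 0 R" "inj_on H (ball 0 R)" "bij_betw f I_int I_int"
    and Hf: "\<And>y. y \<in> I_int \<Longrightarrow> H (complex_of_real y) = complex_of_real (f y)"
  obtains \<sigma> :: complex where "\<sigma> = 1 \<or> \<sigma> = -1" "(\<lambda>z. \<sigma> * H z) \<in> normalized_univalent R"
proof -
  have "continuous_on I_int f"
    using holomorphic_on_imp_continuous_on[OF assms(2)] of_real_I_subset_ball[OF assms(1)] Hf
    by (rule continuous_on_of_real_restriction)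
  then have ends: "f (-1) = -1 \<and> f 1 = 1 \<or> f (-1) = 1 \<and> f 1 = -1"
    using continuous_bij_endpoints[OF _ _ assms(4)] by simp
  define \<sigma> where "\<sigma> = complex_of_real (f 1)"
  have \<sigma>: "\<sigma> = 1 \<or> \<sigma> = -1"
    using ends by (auto simp: \<sigma>_def)
  have "\<sigma> * H (complex_of_real x) \<in> complex_of_real ` I_int" if "x \<in> I_int" for x
  proof -
    have "f x \<in> I_int"
      using assms(4) that by (auto simp: bij_betw_def)
    moreover have "\<sigma> * H (complex_of_real x) = complex_of_real (Re \<sigma> * f x)"
      using \<sigma> Hf[OF that] by auto
    ultimately show ?thesis
      using \<sigma> by (intro image_eqI[of _ _ "Re \<sigma> * f x"]) auto
  qed
  moreover have "\<sigma> * H (-1) = -1" "\<sigma> * H 1 = 1"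
    using Hf[of "-1"] Hf[of 1] ends by (auto simp: \<sigma>_def)
  ultimately have "(\<lambda>z. \<sigma> * H z) \<in> normalized_univalent R"
    using assms(2,3) \<sigma> by (auto simp: normalized_univalent_def inj_on_def intro!: holomorphic_intros)
  then show ?thesis
    using that \<sigma> by blast
qed

lemma epstein_normalized_inverse:
  assumes "epstein \<beta> \<phi>" "0 < \<beta>"
  obtains H and \<sigma> :: complex
  where "H holomorphic_on ball 0 (1 + \<beta>)" "inj_on H (ball 0 (1 + \<beta>))"
    "\<And>x. x \<in> I_int \<Longrightarrow> H (complex_of_real (\<phi> x)) = complex_of_real x"
    "\<sigma> = 1 \<or> \<sigma> = -1" "(\<lambda>z. \<sigma> * H z) \<in> normalized_univalent (1 + \<beta>)"
proof -
  define f where "f = inv_into I_int \<phi>"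
  obtain H where H: "H holomorphic_on slit_plane \<beta>" "inj_on H (slit_plane \<beta>)"
    and Hf: "\<And>y. y \<in> I_int \<Longrightarrow> H (complex_of_real y) = complex_of_real (f y)"
    using assms(1) unfolding epstein_def f_def by blast
  have bij: "bij_betw \<phi> I_int I_int"
    using assms(1) by (simp add: epstein_def diffeo_I_def)
  have hol: "H holomorphic_on ball 0 (1 + \<beta>)" and inj: "inj_on H (ball 0 (1 + \<beta>))"
    using holomorphic_on_subset[OF H(1)] inj_on_subset[OF H(2)] ball_subset_slit_plane by auto
  obtain \<sigma> :: complex where "\<sigma> = 1 \<or> \<sigma> = -1" "(\<lambda>z. \<sigma> * H z) \<in> normalized_univalent (1 + \<beta>)"
    using univalent_extension_normalized[OF _ hol inj bij_betw_inv_into[OF bij] Hf[unfolded f_def]]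
      assms(2) by auto
  moreover have "H (complex_of_real (\<phi> x)) = complex_of_real x" if "x \<in> I_int" for x
  proof -
    have "\<phi> x \<in> I_int"
      using bij that by (auto simp: bij_betw_def)
    then show ?thesis
      using Hf bij that by (simp add: f_def bij_betw_def)
  qed
  ultimately show ?thesis
    using that hol inj by blast
qed

lemma inverse_I_nbhd_extension:
  assumes "0 < \<delta>" "1 + \<delta> \<le> R" "H holomorphic_on ball 0 R" "inj_on H (ball 0 R)"
    and H\<phi>: "\<And>x. x \<in> I_int \<Longrightarrow> H (complex_of_real (\<phi> x)) = complex_of_real x"
    and "\<phi> ` I_int \<subseteq> I_int" and covered: "I_nbhd \<epsilon> \<subseteq> H ` I_nbhd \<delta>"
  shows "\<exists>G. I_nbhd_extension \<phi> \<epsilon> \<delta> G"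
proof -
  obtain G where G: "G holomorphic_on H ` ball 0 R" and GH: "\<And>z. z \<in> ball 0 R \<Longrightarrow> G (H z) = z"
    by (rule holomorphic_has_inverse[OF assms(3) open_ball assms(4)]) auto
  have in_ball: "I_nbhd \<delta> \<subseteq> ball 0 R"
    using assms(2) by (rule I_nbhd_subset_ball)
  then have "G holomorphic_on I_nbhd \<epsilon>"
    using G covered by (meson holomorphic_on_subset image_mono subset_trans)
  moreover have "G ` I_nbhd \<epsilon> \<subseteq> I_nbhd \<delta>"
  proof (rule image_subsetI)
    fix w assume "w \<in> I_nbhd \<epsilon>"
    then obtain z where "z \<in> I_nbhd \<delta>" "w = H z"
      using covered by blast
    then show "G w \<in> I_nbhd \<delta>"
      using GH in_ball by auto
  qed
  moreover have "G (complex_of_real x) = complex_of_real (\<phi> x)" if "x \<in> I_int" for x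
  proof -
    have "\<phi> x \<in> I_int"
      using \<open>\<phi> ` I_int \<subseteq> I_int\<close> that by blast
    then have "complex_of_real (\<phi> x) \<in> ball 0 R"
      using assms(1,2) by auto
    then show ?thesis
      using GH H\<phi>[OF that] by metis
  qed
  ultimately show ?thesis
    unfolding I_nbhd_extension_def by blast
qed

lemma epstein_I_nbhd_extension:
  assumes "0 < \<delta>" "\<delta> \<le> \<beta>"
  obtains \<epsilon> where "\<epsilon> > 0" "\<And>\<phi>. epstein \<beta> \<phi> \<Longrightarrow> \<exists>G. I_nbhd_extension \<phi> \<epsilon> \<delta> G"
proof -
  have "0 < \<beta>"
    using assms by linarith
  have "1 + \<delta> \<le> 1 + \<beta>"
    using assms(2) by simp
  then obtain \<epsilon> where "\<epsilon> > 0"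
    and covers: "\<And>H. H \<in> normalized_univalent (1 + \<beta>) \<Longrightarrow> I_nbhd \<epsilon> \<subseteq> H ` I_nbhd \<delta>"
    by (rule normalized_univalent_covers_I_nbhd[OF assms(1)]) auto
  have "\<exists>G. I_nbhd_extension \<phi> \<epsilon> \<delta> G" if \<phi>: "epstein \<beta> \<phi>" for \<phi>
  proof -
    obtain H and \<sigma> :: complex
      where hol: "H holomorphic_on ball 0 (1 + \<beta>)" and inj: "inj_on H (ball 0 (1 + \<beta>))"
        and H\<phi>: "\<And>x. x \<in> I_int \<Longrightarrow> H (complex_of_real (\<phi> x)) = complex_of_real x"
        and \<sigma>: "\<sigma> = 1 \<or> \<sigma> = -1" "(\<lambda>z. \<sigma> * H z) \<in> normalized_univalent (1 + \<beta>)"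
      by (rule epstein_normalized_inverse[OF \<phi> \<open>0 < \<beta>\<close>]) auto
    have covered: "I_nbhd \<epsilon> \<subseteq> H ` I_nbhd \<delta>"
    proof
      fix w assume "w \<in> I_nbhd \<epsilon>"
      then have "\<sigma> * w \<in> I_nbhd \<epsilon>"
        using \<sigma>(1) uminus_mem_I_nbhd by auto
      then have "\<sigma> * w \<in> (\<lambda>z. \<sigma> * H z) ` I_nbhd \<delta>"
        by (rule subsetD[OF covers[OF \<sigma>(2)]])
      then obtain z where "z \<in> I_nbhd \<delta>" "\<sigma> * w = \<sigma> * H z"
        by (rule imageE)
      then show "w \<in> H ` I_nbhd \<delta>"
        using \<sigma>(1) by auto
    qed
    then show ?thesis
      using assms epstein_maps_I[OF \<phi>] H\<phi> by (intro inverse_I_nbhd_extension[OF _ _ hol inj]) auto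
  qed
  then show ?thesis
    using that \<open>\<epsilon> > 0\<close> by blast
qed

lemma chain_map_maps_I:
  assumes "\<forall>i\<in>{1..j}. epstein \<beta> (\<phi> i)" "\<forall>i\<in>{1..j}. poly (p i) ` I_int \<subseteq> I_int"
  shows "chain_map \<phi> p j ` I_int \<subseteq> I_int"
  using assms
proof (induction j)
  case (Suc j)
  then have "\<phi> (Suc j) ` I_int \<subseteq> I_int"
    by (intro epstein_maps_I[of \<beta>]) simp
  moreover have "poly (p (Suc j)) ` I_int \<subseteq> I_int" "chain_map \<phi> p j ` I_int \<subseteq> I_int"
    using Suc by auto
  ultimately show ?case
    by (auto simp: image_subset_iff)
qed simp

lemma chain_map_Suc_I_nbhd_extension:
  assumes "I_nbhd_extension (chain_map \<phi> p j) \<eta> \<eta>' G"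
    and "I_nbhd_extension (poly (p (Suc j))) \<eta>' \<epsilon> Q" and G': "I_nbhd_extension (\<phi> (Suc j)) \<epsilon> \<delta> G'"
    and chain_I: "chain_map \<phi> p j ` I_int \<subseteq> I_int" and "poly (p (Suc j)) ` I_int \<subseteq> I_int"
  shows "I_nbhd_extension (chain_map \<phi> p (Suc j)) \<eta> \<delta> (G' \<circ> (Q \<circ> G))"
proof -
  have "I_nbhd_extension (poly (p (Suc j)) \<circ> chain_map \<phi> p j) \<eta> \<epsilon> (Q \<circ> G)"
    using assms(1,2) chain_I by (rule I_nbhd_extension_comp)
  moreover have "(poly (p (Suc j)) \<circ> chain_map \<phi> p j) ` I_int \<subseteq> I_int"
    using chain_I assms(5) by (metis image_comp image_mono order_trans)
  ultimately show ?thesis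
    using I_nbhd_extension_comp[OF _ G'] by (simp add: comp_assoc)
qed

lemma chain_map_I_nbhd_extension:
  assumes "0 < \<delta>" "\<delta> \<le> \<beta>" "\<forall>i\<in>{1..j}. poly (p i) ` I_int \<subseteq> I_int"
  shows "\<forall>\<^sub>F \<eta> in at_right 0. \<forall>\<phi>. (\<forall>i\<in>{1..j}. epstein \<beta> (\<phi> i)) \<longrightarrow>
           (\<exists>G. I_nbhd_extension (chain_map \<phi> p j) \<eta> \<delta> G)"
  using assms
proof (induction j arbitrary: \<delta>)
  case 0
  have "\<forall>\<^sub>F \<eta> in at_right 0. \<eta> < \<delta>"
    unfolding eventually_at_right_field using \<open>0 < \<delta>\<close> by blast
  then show ?case
    by eventually_elim (metis I_nbhd_extension_id chain_map.simps(1) less_imp_le)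
next
  case (Suc j)
  obtain \<epsilon> where "\<epsilon> > 0" and ext_\<phi>: "\<And>\<phi>. epstein \<beta> \<phi> \<Longrightarrow> \<exists>G. I_nbhd_extension \<phi> \<epsilon> \<delta> G"
    by (rule epstein_I_nbhd_extension[OF Suc.prems(1,2)]) auto
  have p: "poly (p (Suc j)) ` I_int \<subseteq> I_int"
    using Suc.prems(3) by simp
  obtain \<eta>' where "\<eta>' > 0"
    and ext_p: "I_nbhd_extension (poly (p (Suc j))) \<eta>' \<epsilon> (poly (map_poly of_real (p (Suc j))))"
    by (rule poly_I_nbhd_extension[OF p \<open>\<epsilon> > 0\<close>]) auto
  have "\<forall>\<^sub>F \<eta> in at_right 0. \<forall>\<phi>. (\<forall>i\<in>{1..j}. epstein \<beta> (\<phi> i)) \<longrightarrow>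
           (\<exists>G. I_nbhd_extension (chain_map \<phi> p j) \<eta> (min \<eta>' \<delta>) G)"
    using Suc.prems \<open>\<eta>' > 0\<close> by (intro Suc.IH) auto
  then show ?case
  proof eventually_elim
    case (elim \<eta>)
    show ?case
    proof (intro allI impI)
      fix \<phi> :: "nat \<Rightarrow> real \<Rightarrow> real"
      assume \<phi>: "\<forall>i\<in>{1..Suc j}. epstein \<beta> (\<phi> i)"
      then have \<phi>_j: "\<forall>i\<in>{1..j}. epstein \<beta> (\<phi> i)" and "epstein \<beta> (\<phi> (Suc j))"
        by auto
      then obtain G G' where G: "I_nbhd_extension (chain_map \<phi> p j) \<eta> (min \<eta>' \<delta>) G"
        and G': "I_nbhd_extension (\<phi> (Suc j)) \<epsilon> \<delta> G'"
        using elim ext_\<phi> by blast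
      have "chain_map \<phi> p j ` I_int \<subseteq> I_int"
        using \<phi>_j Suc.prems(3) by (intro chain_map_maps_I) auto
      then show "\<exists>G. I_nbhd_extension (chain_map \<phi> p (Suc j)) \<eta> \<delta> G"
        using I_nbhd_extension_mono[OF G] ext_p G' p
        by (metis chain_map_Suc_I_nbhd_extension min.cobounded1 order_refl)
    qed
  qed
qed

lemma epstein_hat_I_nbhd_extension:
  assumes "\<forall>i\<in>{1..b}. poly (p i) ` I_int \<subseteq> I_int" "0 < \<beta>"
  obtains \<eta> where "\<eta> > 0" "\<And>g. g \<in> epstein_hat \<beta> b p \<Longrightarrow> \<exists>G. I_nbhd_extension g \<eta> \<beta> G"
proof -
  have "\<forall>\<^sub>F \<eta> in at_right 0. \<forall>j\<in>{..b}. \<forall>\<phi>. (\<forall>i\<in>{1..j}. epstein \<beta> (\<phi> i)) \<longrightarrow>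
      (\<exists>G. I_nbhd_extension (chain_map \<phi> p j) \<eta> \<beta> G)"
    using assms by (intro eventually_ball_finite ballI chain_map_I_nbhd_extension) auto
  then obtain \<eta> where "\<eta> > 0" and ext: "\<And>j \<phi>. j \<le> b \<Longrightarrow> \<forall>i\<in>{1..j}. epstein \<beta> (\<phi> i) \<Longrightarrow>
      \<exists>G. I_nbhd_extension (chain_map \<phi> p j) \<eta> \<beta> G"
    unfolding eventually_at_right_field by (metis atMost_iff field_lbound_gt_zero)
  have "\<exists>G. I_nbhd_extension g \<eta> \<beta> G" if g: "g \<in> epstein_hat \<beta> b p" for g
  proof -
    obtain j \<phi> where "j \<le> b" "\<forall>i\<in>{1..j}. epstein \<beta> (\<phi> i)"
      and "\<forall>x\<in>I_int. g x = chain_map \<phi> p j x"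
      using g unfolding epstein_hat_def by blast
    then show ?thesis
      using ext by (auto simp: I_nbhd_extension_def)
  qed
  then show ?thesis
    using that \<open>\<eta> > 0\<close> by blast
qed

theorem lemma5p13:
  fixes b :: nat and p :: "nat \<Rightarrow> real poly" and \<beta> :: real
  assumes "\<forall>i\<in>{1..b}. unimodal_poly_I (p i)"
    and "0 < \<beta>" and "\<beta> < 1"
  shows "\<exists>U M. jordan_domain U \<and> complex_of_real ` I_int \<subseteq> U \<and> M > 0 \<and>
           (\<forall>g\<in>epstein_hat \<beta> b p. \<exists>G. G holomorphic_on U \<and>
               (\<forall>x\<in>I_int. G (complex_of_real x) = complex_of_real (g x)) \<and>
               (\<forall>z\<in>U. cmod (G z) \<le> M))"
proof -
  have "\<forall>i\<in>{1..b}. poly (p i) ` I_int \<subseteq> I_int"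
    using assms(1) by (simp add: unimodal_poly_I_def)
  then obtain \<eta> where "\<eta> > 0" and ext: "\<And>g. g \<in> epstein_hat \<beta> b p \<Longrightarrow> \<exists>G. I_nbhd_extension g \<eta> \<beta> G"
    using epstein_hat_I_nbhd_extension assms(2) by blast
  obtain U where U: "jordan_domain U" "complex_of_real ` I_int \<subseteq> U" "U \<subseteq> I_nbhd \<eta>"
    using jordan_domain_between_I_and_I_nbhd[OF \<open>\<eta> > 0\<close>] by blast
  have "G holomorphic_on U \<and> (\<forall>x\<in>I_int. G (complex_of_real x) = complex_of_real (g x)) \<and>
      (\<forall>z\<in>U. cmod (G z) \<le> 1 + \<beta>)" if G: "I_nbhd_extension g \<eta> \<beta> G" for g G
    using G U(3) I_nbhd_extension_norm_le[OF G] unfolding I_nbhd_extension_def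
    by (blast intro: holomorphic_on_subset)
  then have "\<forall>g\<in>epstein_hat \<beta> b p. \<exists>G. G holomorphic_on U \<and>
      (\<forall>x\<in>I_int. G (complex_of_real x) = complex_of_real (g x)) \<and> (\<forall>z\<in>U. cmod (G z) \<le> 1 + \<beta>)"
    using ext by meson
  then show ?thesis
    using U assms(2) by (intro exI[of _ U] exI[of _ "1 + \<beta>"]) auto
qed

end
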